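(* Let $L,R$ be nonempty subsets of a group $G$ such that $\mathcal{W}(L)$ and $\mathcal{W}(R)$ are subgroups of $G$. Then $2\mathrm{S}(G;L,R)$ is strongly connected if and only if $G=\mathcal{W}(L)\mathcal{W}(R)$ and some element of $\bar{L}$ or of $\bar{R}$ is strongly connected to $e$.
   Context: For nonempty subsets $L,R$ of a group $G$, the two-sided group digraph $2\mathrm{S}(G;L,R)$ has vertex set $G$ and a directed arc $(g,h)$ if and only if $h=l^{-1}gr$ for some $l\in L$, $r\in R$. Write $\bar{L}=L\cup L^{-1}$, $\bar{R}=R\cup R^{-1}$. For nonempty $S$, $\mathcal{W}(S)$ is the set of elements expressible as finite products $s_1\cdots s_n$, $n\ge1$, $s_i\in S$. Vertex $g$ is strongly connected to $h$ if there are directed paths from $g$ to $h$ and from $h$ to $g$; the digraph is strongly connected if every pair of vertices is strongly connected. *)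

theory Defs
  imports "HOL-Algebra.Coset"
begin

definition two_sided_arc :: "('a, 'b) monoid_scheme \<Rightarrow> 'a set \<Rightarrow> 'a set \<Rightarrow> 'a \<Rightarrow> 'a \<Rightarrow> bool" where
  "two_sided_arc G L R g h \<longleftrightarrow> g \<in> carrier G \<and> h \<in> carrier G \<and>
     (\<exists>l\<in>L. \<exists>r\<in>R. h = inv\<^bsub>G\<^esub> l \<otimes>\<^bsub>G\<^esub> g \<otimes>\<^bsub>G\<^esub> r)"

definition two_sided_path :: "('a, 'b) monoid_scheme \<Rightarrow> 'a set \<Rightarrow> 'a set \<Rightarrow> 'a \<Rightarrow> 'a \<Rightarrow> bool" where
  "two_sided_path G L R = (two_sided_arc G L R)\<^sup>*\<^sup>*"

definition strongly_connected_to :: "('a, 'b) monoid_scheme \<Rightarrow> 'a set \<Rightarrow> 'a set \<Rightarrow> 'a \<Rightarrow> 'a \<Rightarrow> bool" where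
  "strongly_connected_to G L R g h \<longleftrightarrow> two_sided_path G L R g h \<and> two_sided_path G L R h g"

definition two_sided_strongly_connected :: "('a, 'b) monoid_scheme \<Rightarrow> 'a set \<Rightarrow> 'a set \<Rightarrow> bool" where
  "two_sided_strongly_connected G L R \<longleftrightarrow>
     (\<forall>g\<in>carrier G. \<forall>h\<in>carrier G. strongly_connected_to G L R g h)"

definition words :: "('a, 'b) monoid_scheme \<Rightarrow> 'a set \<Rightarrow> 'a set" where
  "words G S = {x. \<exists>xs. xs \<noteq> [] \<and> set xs \<subseteq> S \<and> x = foldr (\<lambda>a b. a \<otimes>\<^bsub>G\<^esub> b) xs \<one>\<^bsub>G\<^esub>}"

definition sym_closure :: "('a, 'b) monoid_scheme \<Rightarrow> 'a set \<Rightarrow> 'a set" where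
  "sym_closure G S = S \<union> (\<lambda>x. inv\<^bsub>G\<^esub> x) ` S"

end

theory Submission
  imports Defs "HOL-Number_Theory.Cong"
begin

text \<open>
  A path of length \<open>n\<close> from \<open>g\<close> ends exactly at the elements \<open>p\<inverse> g q\<close> with \<open>p \<in> L\<^sup>n\<close> and
  \<open>q \<in> R\<^sup>n\<close>, the \<open>n\<close>-fold product sets. Hence strong connectivity forces \<open>G = W(L)W(R)\<close>.
  Conversely, to reach \<open>g = ab\<close> from \<open>e\<close> and to return, words for \<open>a\<^sup>\<plusminus>\<^sup>1\<close> over \<open>L\<close> and
  for \<open>b\<^sup>\<plusminus>\<^sup>1\<close> over \<open>R\<close> must be brought to a common length. As \<open>W(L)\<close> and \<open>W(R)\<close> are
  subgroups, \<open>e \<in> L\<^sup>N \<inter> R\<^sup>N\<close> for some \<open>N \<ge> 1\<close>, so lengths only matter modulo \<open>N\<close>. A path from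
  \<open>e\<close> to some \<open>x \<in> L \<union> L\<inverse> \<union> R \<union> R\<inverse>\<close> yields \<open>c \<in> L\<^sup>\<alpha> \<inter> R\<^sup>\<beta>\<close> with \<open>\<alpha> - \<beta> \<equiv> \<plusminus>1 (mod N)\<close>, and
  multiplying both words by a suitable power of \<open>c\<close> equalises their lengths modulo \<open>N\<close>.
\<close>

lemma ex_cong_add_mult_shift:
  fixes N \<alpha> \<beta> i j :: nat
  assumes "N \<ge> 1" "[\<alpha> = \<beta> + 1] (mod N)"
  shows "\<exists>t. [i + t * \<alpha> = j + t * \<beta>] (mod N)"
proof -
  obtain M where N: "N = Suc M" using assms(1) by (cases N) auto
  define t where "t = j + M * i"
  have "[i + t * \<alpha> = i + t * (\<beta> + 1)] (mod N)"
    using assms(2) by (intro cong_add cong_mult cong_refl)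
  also have "i + t * (\<beta> + 1) = j + t * \<beta> + i * N"
    by (simp add: t_def N algebra_simps)
  also have "[\<dots> = j + t * \<beta>] (mod N)"
    by (simp add: cong_def)
  finally show ?thesis by blast
qed

primrec set_pow :: "('a, 'b) monoid_scheme \<Rightarrow> 'a set \<Rightarrow> nat \<Rightarrow> 'a set" where
  "set_pow G S 0 = {\<one>\<^bsub>G\<^esub>}"
| "set_pow G S (Suc n) = S <#>\<^bsub>G\<^esub> set_pow G S n"

declare set_pow.simps(2) [simp del]

context group
begin

lemma inv_mult_cancel_left [simp]: "x \<in> carrier G \<Longrightarrow> y \<in> carrier G \<Longrightarrow> inv x \<otimes> (x \<otimes> y) = y"
  by (simp add: m_assoc[symmetric])

lemma mult_inv_cancel_left [simp]: "x \<in> carrier G \<Longrightarrow> y \<in> carrier G \<Longrightarrow> x \<otimes> (inv x \<otimes> y) = y"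
  by (simp add: m_assoc[symmetric])

lemma mem_set_pow_Suc_iff:
  "x \<in> set_pow G S (Suc n) \<longleftrightarrow> (\<exists>a \<in> S. \<exists>b \<in> set_pow G S n. x = a \<otimes> b)"
  by (auto simp: set_pow.simps set_mult_def)

lemma set_pow_carrier: "S \<subseteq> carrier G \<Longrightarrow> set_pow G S n \<subseteq> carrier G"
  by (induct n) (auto simp: subset_iff mem_set_pow_Suc_iff)

lemma set_pow_one: "S \<subseteq> carrier G \<Longrightarrow> s \<in> S \<Longrightarrow> s \<in> set_pow G S 1"
  by (auto simp: One_nat_def subset_iff mem_set_pow_Suc_iff intro!: bexI[of _ s])

lemma set_pow_mult:
  assumes "S \<subseteq> carrier G" "a \<in> set_pow G S i" "b \<in> set_pow G S j"
  shows "a \<otimes> b \<in> set_pow G S (i + j)"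
  using assms(2)
proof (induct i arbitrary: a)
  case 0
  then show ?case using assms(3) set_pow_carrier[OF assms(1)] by (auto simp: subset_iff)
next
  case (Suc i)
  then obtain s a' where "s \<in> S" "a' \<in> set_pow G S i" "a = s \<otimes> a'"
    by (auto simp: mem_set_pow_Suc_iff)
  moreover have "s \<otimes> a' \<otimes> b = s \<otimes> (a' \<otimes> b)"
    using calculation assms set_pow_carrier[OF assms(1)] by (meson m_assoc subsetD)
  ultimately show ?case using Suc.hyps by (auto simp: mem_set_pow_Suc_iff)
qed

lemma nat_pow_mem_set_pow:
  assumes "S \<subseteq> carrier G" "c \<in> set_pow G S \<alpha>"
  shows "c [^] t \<in> set_pow G S (t * \<alpha>)"
proof (induct t)
  case (Suc t)
  then have "c [^] t \<otimes> c \<in> set_pow G S (t * \<alpha> + \<alpha>)"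
    using set_pow_mult assms by blast
  then show ?case by (simp add: add.commute)
qed simp

lemma set_pow_pad:
  assumes "S \<subseteq> carrier G" "\<one> \<in> set_pow G S N"
  shows "set_pow G S a \<subseteq> set_pow G S (a + k * N)"
proof
  fix x assume x: "x \<in> set_pow G S a"
  have "x \<otimes> \<one> [^] k \<in> set_pow G S (a + k * N)"
    using set_pow_mult nat_pow_mem_set_pow assms x by blast
  then show "x \<in> set_pow G S (a + k * N)"
    using x set_pow_carrier[OF assms(1)] by (auto simp: subset_iff)
qed

lemma words_iff_set_pow: "x \<in> words G S \<longleftrightarrow> (\<exists>n \<ge> 1. x \<in> set_pow G S n)"
proof -
  have foldr_mem: "set xs \<subseteq> S \<Longrightarrow> foldr (\<otimes>) xs \<one> \<in> set_pow G S (length xs)" for xs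
    by (induct xs) (auto simp: mem_set_pow_Suc_iff)
  have mem_foldr: "x \<in> set_pow G S n \<Longrightarrow>
      \<exists>xs. length xs = n \<and> set xs \<subseteq> S \<and> x = foldr (\<otimes>) xs \<one>" for x n
  proof (induct n arbitrary: x)
    case (Suc n)
    then obtain a b xs where "a \<in> S" "x = a \<otimes> b" "length xs = n" "set xs \<subseteq> S" "b = foldr (\<otimes>) xs \<one>"
      by (meson mem_set_pow_Suc_iff)
    then show ?case by (intro exI[of _ "a # xs"]) auto
  qed simp
  show ?thesis
  proof
    assume "x \<in> words G S"
    then obtain xs where "xs \<noteq> []" "set xs \<subseteq> S" "x = foldr (\<otimes>) xs \<one>"
      unfolding words_def by blast
    moreover have "length xs \<ge> 1"
      using \<open>xs \<noteq> []\<close> by (simp add: Suc_le_eq)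
    ultimately show "\<exists>n \<ge> 1. x \<in> set_pow G S n"
      using foldr_mem by blast
  next
    assume "\<exists>n \<ge> 1. x \<in> set_pow G S n"
    then obtain xs where "xs \<noteq> []" "set xs \<subseteq> S" "x = foldr (\<otimes>) xs \<one>"
      using mem_foldr by (metis list.size(3) not_one_le_zero)
    then show "x \<in> words G S"
      unfolding words_def by blast
  qed
qed

lemma two_sided_path_iff:
  assumes "L \<subseteq> carrier G" "R \<subseteq> carrier G" "g \<in> carrier G"
  shows "two_sided_path G L R g h \<longleftrightarrow>
    (\<exists>n. \<exists>p \<in> set_pow G L n. \<exists>q \<in> set_pow G R n. h = inv p \<otimes> g \<otimes> q)"
proof
  assume "two_sided_path G L R g h"
  then show "\<exists>n. \<exists>p \<in> set_pow G L n. \<exists>q \<in> set_pow G R n. h = inv p \<otimes> g \<otimes> q"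
    unfolding two_sided_path_def
  proof (induct rule: rtranclp_induct)
    case base
    show ?case using assms(3) by (intro exI[of _ 0]) simp
  next
    case (step y z)
    then obtain n p q where pq: "p \<in> set_pow G L n" "q \<in> set_pow G R n" "y = inv p \<otimes> g \<otimes> q"
      by blast
    from step(2) obtain l r where lr: "l \<in> L" "r \<in> R" "z = inv l \<otimes> y \<otimes> r"
      unfolding two_sided_arc_def by blast
    have "p \<otimes> l \<in> set_pow G L (n + 1)" "q \<otimes> r \<in> set_pow G R (n + 1)"
      using set_pow_mult set_pow_one pq lr assms by blast+
    moreover have "z = inv (p \<otimes> l) \<otimes> g \<otimes> (q \<otimes> r)"
      using pq lr assms set_pow_carrier by (auto simp: subset_iff inv_mult_group m_assoc)
    ultimately show ?case by blast
  qed
next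
  assume "\<exists>n. \<exists>p \<in> set_pow G L n. \<exists>q \<in> set_pow G R n. h = inv p \<otimes> g \<otimes> q"
  then obtain n p q where "p \<in> set_pow G L n" "q \<in> set_pow G R n" "h = inv p \<otimes> g \<otimes> q"
    by blast
  with assms(3) show "two_sided_path G L R g h"
  proof (induct n arbitrary: g p q)
    case 0
    then show ?case by (simp add: two_sided_path_def)
  next
    case (Suc n)
    then obtain l p' r q' where pq: "l \<in> L" "p' \<in> set_pow G L n" "p = l \<otimes> p'"
      "r \<in> R" "q' \<in> set_pow G R n" "q = r \<otimes> q'"
      by (auto simp: mem_set_pow_Suc_iff)
    have carr: "l \<in> carrier G" "r \<in> carrier G" "p' \<in> carrier G" "q' \<in> carrier G"
      using pq assms set_pow_carrier by blast+
    define g' where "g' = inv l \<otimes> g \<otimes> r"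
    have "two_sided_arc G L R g g'"
      unfolding two_sided_arc_def g'_def using Suc.prems pq carr by auto
    moreover have "two_sided_path G L R g' h"
      using Suc.hyps[of g' p' q'] Suc.prems pq carr
      by (simp add: g'_def inv_mult_group m_assoc)
    ultimately show ?case
      unfolding two_sided_path_def by (rule converse_rtranclp_into_rtranclp)
  qed
qed

lemma set_pow_subset_words:
  assumes "subgroup (words G S) G"
  shows "set_pow G S n \<subseteq> words G S"
proof (cases n)
  case 0
  then show ?thesis using subgroup.one_closed[OF assms] by simp
next
  case (Suc m)
  then show ?thesis by (auto simp: words_iff_set_pow intro!: exI[of _ "Suc m"])
qed

lemma inv_mem_sym_closure: "S \<subseteq> carrier G \<Longrightarrow> y \<in> sym_closure G S \<Longrightarrow> inv y \<in> sym_closure G S"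
  by (auto simp: sym_closure_def subset_iff)

lemma ex_period_with_inverse:
  assumes "S \<subseteq> carrier G" "T \<subseteq> carrier G" "s \<in> S" "inv s \<in> words G S" "\<one> \<in> words G T"
  shows "\<exists>N \<ge> 1. \<one> \<in> set_pow G S N \<and> \<one> \<in> set_pow G T N \<and> inv s \<in> set_pow G S (N - 1)"
proof -
  obtain m where m: "inv s \<in> set_pow G S m"
    using assms(4) words_iff_set_pow by blast
  obtain n where "n \<ge> 1" "\<one> \<in> set_pow G T n"
    using assms(5) words_iff_set_pow by blast
  then obtain n' where n': "\<one> \<in> set_pow G T (Suc n')"
    by (cases n) auto
  have "s \<otimes> inv s \<in> set_pow G S (1 + m)"
    using set_pow_mult set_pow_one assms(1,3) m by blast
  then have one_S: "\<one> \<in> set_pow G S (m + 1)"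
    using assms(1,3) by (auto simp: subset_iff)
  define N where "N = Suc n' * (m + 1)"
  have "\<one> [^] Suc n' \<in> set_pow G S N"
    unfolding N_def by (rule nat_pow_mem_set_pow[OF assms(1) one_S])
  moreover have "\<one> [^] (m + 1) \<in> set_pow G T N"
    unfolding N_def mult.commute[of "Suc n'"] by (rule nat_pow_mem_set_pow[OF assms(2) n'])
  moreover have "inv s \<in> set_pow G S (m + n' * (m + 1))"
    using set_pow_pad[OF assms(1) one_S] m by blast
  moreover have "m + n' * (m + 1) = N - 1" "N \<ge> 1"
    unfolding N_def by simp_all
  ultimately show ?thesis by auto
qed

lemma ex_period_sym_closure:
  assumes "S \<subseteq> carrier G" "T \<subseteq> carrier G" "subgroup (words G S) G" "\<one> \<in> words G T"
    and "y \<in> sym_closure G S"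
  shows "\<exists>N \<ge> 1. \<one> \<in> set_pow G S N \<and> \<one> \<in> set_pow G T N \<and>
    (y \<in> set_pow G S 1 \<or> y \<in> set_pow G S (N - 1))"
proof -
  have inv_words: "inv s \<in> words G S" if "s \<in> S" for s
    using subgroup.m_inv_closed[OF assms(3)] set_pow_subset_words[OF assms(3), of 1]
      set_pow_one[OF assms(1) that] by blast
  from assms(5) consider "y \<in> S" | s where "s \<in> S" "y = inv s"
    unfolding sym_closure_def by blast
  then show ?thesis
  proof cases
    case 1
    then show ?thesis
      using ex_period_with_inverse[OF assms(1,2) 1 inv_words[OF 1] assms(4)]
        set_pow_one[OF assms(1) 1] by blast
  next
    case 2
    then show ?thesis
      using ex_period_with_inverse[OF assms(1,2) 2(1) inv_words[OF 2(1)] assms(4)] by blast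
  qed
qed

end

definition balancing_element :: "('a, 'b) monoid_scheme \<Rightarrow> 'a set \<Rightarrow> 'a set \<Rightarrow> 'a \<Rightarrow> bool" where
  "balancing_element G S T c \<longleftrightarrow> (\<exists>N \<alpha> \<beta>. N \<ge> 1 \<and>
     \<one>\<^bsub>G\<^esub> \<in> set_pow G S N \<and> \<one>\<^bsub>G\<^esub> \<in> set_pow G T N \<and> c \<in> set_pow G S \<alpha> \<and> c \<in> set_pow G T \<beta> \<and>
     ([\<alpha> = \<beta> + 1] (mod N) \<or> [\<beta> = \<alpha> + 1] (mod N)))"

lemma balancing_element_swap: "balancing_element G S T c \<Longrightarrow> balancing_element G T S c"
  unfolding balancing_element_def by blast

context group
begin

lemma balancing_element_mult:
  assumes "S \<subseteq> carrier G" "N \<ge> 1" "\<one> \<in> set_pow G S N" "\<one> \<in> set_pow G T N"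
    and "p \<in> set_pow G S k" "p \<otimes> y \<in> set_pow G T k"
    and "y \<in> set_pow G S 1 \<or> y \<in> set_pow G S (N - 1)"
  shows "balancing_element G S T (p \<otimes> y)"
  using assms(7)
proof
  assume "y \<in> set_pow G S 1"
  then have "p \<otimes> y \<in> set_pow G S (k + 1)"
    using set_pow_mult assms(1,5) by blast
  then show ?thesis
    unfolding balancing_element_def using assms(2-4,6) cong_refl by blast
next
  assume "y \<in> set_pow G S (N - 1)"
  then have "p \<otimes> y \<in> set_pow G S (k + (N - 1))"
    using set_pow_mult assms(1,5) by blast
  moreover have "[k = k + (N - 1) + 1] (mod N)"
    using assms(2) by (simp add: cong_def)
  ultimately show ?thesis
    unfolding balancing_element_def using assms(2-4,6) by blast
qed

lemma ex_balancing_element: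
  assumes "L \<subseteq> carrier G" "R \<subseteq> carrier G"
    and "subgroup (words G L) G" "subgroup (words G R) G"
    and "x \<in> sym_closure G L \<union> sym_closure G R" "two_sided_path G L R \<one> x"
  shows "\<exists>c. balancing_element G L R c"
proof -
  obtain k p q where pq: "p \<in> set_pow G L k" "q \<in> set_pow G R k" "x = inv p \<otimes> \<one> \<otimes> q"
    using assms(6) two_sided_path_iff[OF assms(1,2) one_closed] by blast
  have carr: "p \<in> carrier G" "q \<in> carrier G"
    using pq set_pow_carrier assms(1,2) by blast+
  have one_words: "\<one> \<in> words G L" "\<one> \<in> words G R"
    using subgroup.one_closed assms(3,4) by blast+
  from assms(5) show ?thesis
  proof
    assume "x \<in> sym_closure G L"
    then obtain N where N: "N \<ge> 1" "\<one> \<in> set_pow G L N" "\<one> \<in> set_pow G R N"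
      and x: "x \<in> set_pow G L 1 \<or> x \<in> set_pow G L (N - 1)"
      using ex_period_sym_closure[OF assms(1,2,3) one_words(2)] by blast
    have "p \<otimes> x = q"
      using pq(3) carr by (simp add: m_assoc[symmetric])
    then have "balancing_element G L R (p \<otimes> x)"
      using balancing_element_mult[OF assms(1) N pq(1) _ x] pq(2) by simp
    then show ?thesis ..
  next
    assume "x \<in> sym_closure G R"
    then have "inv x \<in> sym_closure G R"
      using inv_mem_sym_closure assms(2) by blast
    then obtain N where N: "N \<ge> 1" "\<one> \<in> set_pow G R N" "\<one> \<in> set_pow G L N"
      and x: "inv x \<in> set_pow G R 1 \<or> inv x \<in> set_pow G R (N - 1)"
      using ex_period_sym_closure[OF assms(2,1,4) one_words(1)] by blast
    have "q \<otimes> inv x = p"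
      using pq(3) carr by (simp add: inv_mult_group m_assoc[symmetric])
    then have "balancing_element G R L (q \<otimes> inv x)"
      using balancing_element_mult[OF assms(2) N pq(2) _ x] pq(1) by simp
    then show ?thesis by (blast dest: balancing_element_swap)
  qed
qed

lemma balancing_element_align:
  assumes "S \<subseteq> carrier G" "T \<subseteq> carrier G" "balancing_element G S T c"
    and "u \<in> set_pow G S i" "v \<in> set_pow G T j"
  shows "\<exists>n (t :: nat). c [^] t \<otimes> u \<in> set_pow G S n \<and> c [^] t \<otimes> v \<in> set_pow G T n \<and>
    u \<otimes> c [^] t \<in> set_pow G S n \<and> v \<otimes> c [^] t \<in> set_pow G T n"
proof -
  obtain N \<alpha> \<beta> where N: "N \<ge> 1" "\<one> \<in> set_pow G S N" "\<one> \<in> set_pow G T N"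
    and c: "c \<in> set_pow G S \<alpha>" "c \<in> set_pow G T \<beta>"
    and shift: "[\<alpha> = \<beta> + 1] (mod N) \<or> [\<beta> = \<alpha> + 1] (mod N)"
    using assms(3) unfolding balancing_element_def by blast
  obtain t where "[i + t * \<alpha> = j + t * \<beta>] (mod N)"
    using shift ex_cong_add_mult_shift[OF N(1)] by (meson cong_sym)
  then obtain k1 k2 where lengths: "j + t * \<beta> + k1 * N = i + t * \<alpha> + k2 * N"
    unfolding cong_iff_lin_nat by blast
  have "c [^] t \<otimes> u \<in> set_pow G S (i + t * \<alpha>)" "u \<otimes> c [^] t \<in> set_pow G S (i + t * \<alpha>)"
    using set_pow_mult[OF assms(1)] nat_pow_mem_set_pow[OF assms(1) c(1)] assms(4)
    by (metis add.commute)+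
  then have S: "c [^] t \<otimes> u \<in> set_pow G S (i + t * \<alpha> + k2 * N)"
      "u \<otimes> c [^] t \<in> set_pow G S (i + t * \<alpha> + k2 * N)"
    using set_pow_pad[OF assms(1) N(2)] by blast+
  have "c [^] t \<otimes> v \<in> set_pow G T (j + t * \<beta>)" "v \<otimes> c [^] t \<in> set_pow G T (j + t * \<beta>)"
    using set_pow_mult[OF assms(2)] nat_pow_mem_set_pow[OF assms(2) c(2)] assms(5)
    by (metis add.commute)+
  then have T: "c [^] t \<otimes> v \<in> set_pow G T (j + t * \<beta> + k1 * N)"
      "v \<otimes> c [^] t \<in> set_pow G T (j + t * \<beta> + k1 * N)"
    using set_pow_pad[OF assms(2) N(3)] by blast+
  show ?thesis
    using S T unfolding lengths by blast
qed

lemma carrier_eq_words_mult_if_strongly_connected: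
  assumes "L \<subseteq> carrier G" "R \<subseteq> carrier G"
    and "subgroup (words G L) G" "subgroup (words G R) G"
    and "two_sided_strongly_connected G L R"
  shows "carrier G = words G L <#> words G R"
proof
  show "carrier G \<subseteq> words G L <#> words G R"
  proof
    fix h assume h: "h \<in> carrier G"
    then have "two_sided_path G L R \<one> h"
      using assms(5) unfolding two_sided_strongly_connected_def strongly_connected_to_def by blast
    then obtain n p q where pq: "p \<in> set_pow G L n" "q \<in> set_pow G R n" "h = inv p \<otimes> \<one> \<otimes> q"
      using two_sided_path_iff[OF assms(1,2) one_closed] by blast
    have "inv p \<in> words G L"
      using set_pow_subset_words[OF assms(3)] pq(1) subgroup.m_inv_closed[OF assms(3)] by blast
    moreover have "q \<in> words G R"
      using set_pow_subset_words[OF assms(4)] pq(2) by blast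
    moreover have "h = inv p \<otimes> q"
      using pq set_pow_carrier[OF assms(1)] set_pow_carrier[OF assms(2)] by (simp add: subset_iff)
    ultimately show "h \<in> words G L <#> words G R"
      unfolding set_mult_def by blast
  qed
  show "words G L <#> words G R \<subseteq> carrier G"
    using set_mult_closed[OF subgroup.subset[OF assms(3)] subgroup.subset[OF assms(4)]] .
qed

lemma two_sided_strongly_connected_if_balancing_element:
  assumes "L \<subseteq> carrier G" "R \<subseteq> carrier G"
    and "subgroup (words G L) G" "subgroup (words G R) G"
    and "carrier G = words G L <#> words G R" "balancing_element G L R c"
  shows "two_sided_strongly_connected G L R"
proof -
  have c: "c \<in> carrier G"
    using assms(6) set_pow_carrier[OF assms(1)] unfolding balancing_element_def by blast
  have factor: "\<exists>a b. a \<in> words G L \<and> b \<in> words G R \<and> g = a \<otimes> b" if "g \<in> carrier G" for g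
    using that assms(5) unfolding set_mult_def by blast
  have words_carrier: "words G L \<subseteq> carrier G" "words G R \<subseteq> carrier G"
    using subgroup.subset assms(3,4) by blast+
  have from_one: "two_sided_path G L R \<one> g" if g: "g \<in> carrier G" for g
  proof -
    obtain a b where ab: "a \<in> words G L" "b \<in> words G R" "g = a \<otimes> b"
      using factor[OF g] by blast
    obtain i j where "inv a \<in> set_pow G L i" "b \<in> set_pow G R j"
      using subgroup.m_inv_closed[OF assms(3) ab(1)] ab(2) words_iff_set_pow by meson
    then obtain n and t :: nat
      where "c [^] t \<otimes> inv a \<in> set_pow G L n" "c [^] t \<otimes> b \<in> set_pow G R n"
      using balancing_element_align[OF assms(1,2,6)] by blast
    moreover have "g = inv (c [^] t \<otimes> inv a) \<otimes> \<one> \<otimes> (c [^] t \<otimes> b)"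
      using ab words_carrier c by (simp add: subset_iff inv_mult_group m_assoc)
    ultimately show ?thesis
      using two_sided_path_iff[OF assms(1,2) one_closed] by blast
  qed
  have to_one: "two_sided_path G L R g \<one>" if g: "g \<in> carrier G" for g
  proof -
    obtain a b where ab: "a \<in> words G L" "b \<in> words G R" "g = a \<otimes> b"
      using factor[OF g] by blast
    obtain i j where "a \<in> set_pow G L i" "inv b \<in> set_pow G R j"
      using subgroup.m_inv_closed[OF assms(4) ab(2)] ab(1) words_iff_set_pow by meson
    then obtain n and t :: nat
      where "a \<otimes> c [^] t \<in> set_pow G L n" "inv b \<otimes> c [^] t \<in> set_pow G R n"
      using balancing_element_align[OF assms(1,2,6)] by blast
    moreover have "\<one> = inv (a \<otimes> c [^] t) \<otimes> g \<otimes> (inv b \<otimes> c [^] t)"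
      using ab words_carrier c by (simp add: subset_iff inv_mult_group m_assoc)
    ultimately show ?thesis
      using two_sided_path_iff[OF assms(1,2) g] by blast
  qed
  show ?thesis
    unfolding two_sided_strongly_connected_def strongly_connected_to_def
    using from_one to_one unfolding two_sided_path_def by (meson rtranclp_trans)
qed

end

theorem mainTheorem12:
  fixes G :: "('a, 'b) monoid_scheme" and L R :: "'a set"
  assumes "group G"
    and "L \<subseteq> carrier G" and "L \<noteq> {}"
    and "R \<subseteq> carrier G" and "R \<noteq> {}"
    and "subgroup (words G L) G"
    and "subgroup (words G R) G"
  shows "two_sided_strongly_connected G L R \<longleftrightarrow>
           (carrier G = words G L <#>\<^bsub>G\<^esub> words G R \<and>
            (\<exists>x \<in> sym_closure G L \<union> sym_closure G R. strongly_connected_to G L R x \<one>\<^bsub>G\<^esub>))"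
    (is "?connected \<longleftrightarrow> ?factorization \<and> ?witness")
proof -
  interpret group G by fact
  note hyps = assms(2,4,6,7)
  have "?factorization \<and> ?witness" if connected: ?connected
  proof -
    obtain l where "l \<in> L" using \<open>L \<noteq> {}\<close> by blast
    then have "l \<in> sym_closure G L" "strongly_connected_to G L R l \<one>\<^bsub>G\<^esub>"
      using connected \<open>L \<subseteq> carrier G\<close> unfolding sym_closure_def two_sided_strongly_connected_def by blast+
    then show ?thesis
      using carrier_eq_words_mult_if_strongly_connected[OF hyps connected] by blast
  qed
  moreover have ?connected if factorization: ?factorization and witness: ?witness
  proof -
    obtain x where "x \<in> sym_closure G L \<union> sym_closure G R" "two_sided_path G L R \<one>\<^bsub>G\<^esub> x"
      using witness unfolding strongly_connected_to_def by blast
    then obtain c where "balancing_element G L R c"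
      using ex_balancing_element[OF hyps] by blast
    then show ?thesis
      using two_sided_strongly_connected_if_balancing_element[OF hyps factorization] by blast
  qed
  ultimately show ?thesis by blast
qed

end
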